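(* Let $Q=[u_1,\dots,u_{2n}]\subset\mathbb{S}^2$ with $2n\ge 6$ be a spherical polygon which is symmetric, i.e. $u_{i+n}=-u_i$ for all $i$. Let $D^+$ be the number of self-intersections of $Q$ and $I$ the number of inflections of $Q$. Then $2D^++I\ge 6$.
   Context: A spherical polygon $Q=[u_1,\dots,u_m]$ is a cyclic sequence of points of $\mathbb{S}^2$ (indices mod $m$) whose edges are the minimal great-circle arcs from $u_i$ to $u_{i+1}$. Standing assumption: no three vertices of $Q$ lie on a common great circle. A self-intersection is a pair of non-adjacent edges that intersect. With $[a,b,c]$ the determinant of $a,b,c\in\mathbb{R}^3$, the pair $\{u_i,u_{i+1}\}$ is an inflection if $[u_{i-1},u_i,u_{i+1}]$ and $[u_i,u_{i+1},u_{i+2}]$ have opposite signs. *)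

theory Defs
  imports "HOL-Analysis.Analysis"
begin

definition det3 :: "real^3 \<Rightarrow> real^3 \<Rightarrow> real^3 \<Rightarrow> real" where
  "det3 a b c = a \<bullet> (cross3 b c)"

text \<open>Minimal great-circle arc from a to b (for non-antipodal unit vectors a, b):
  the radial projection onto the sphere of the chord from a to b.\<close>
definition sph_arc :: "real^3 \<Rightarrow> real^3 \<Rightarrow> (real^3) set" where
  "sph_arc a b = {sgn ((1 - t) *\<^sub>R a + t *\<^sub>R b) | t. 0 \<le> t \<and> t \<le> 1}"

definition pedge :: "nat \<Rightarrow> (nat \<Rightarrow> real^3) \<Rightarrow> nat \<Rightarrow> (real^3) set" where
  "pedge m u i = sph_arc (u (i mod m)) (u (Suc i mod m))"

text \<open>Edges i, j (with i < j < m) are adjacent iff j = i+1 or (i = 0 and j = m-1).\<close>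
definition self_intersections :: "nat \<Rightarrow> (nat \<Rightarrow> real^3) \<Rightarrow> (nat \<times> nat) set" where
  "self_intersections m u =
     {(i, j). i < j \<and> j < m \<and> j \<noteq> Suc i \<and> \<not> (i = 0 \<and> j = m - 1)
              \<and> pedge m u i \<inter> pedge m u j \<noteq> {}}"

text \<open>Index i < m marks an inflection {u_i, u_(i+1)}:
  [u_(i-1), u_i, u_(i+1)] and [u_i, u_(i+1), u_(i+2)] have opposite signs.\<close>
definition inflections :: "nat \<Rightarrow> (nat \<Rightarrow> real^3) \<Rightarrow> nat set" where
  "inflections m u =
     {i. i < m \<and>
         det3 (u ((i + m - 1) mod m)) (u (i mod m)) (u (Suc i mod m)) *
         det3 (u (i mod m)) (u (Suc i mod m)) (u ((i + 2) mod m)) < 0}"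

end

(*
  Write t i = [u (i - 1), u i, u (i + 1)]. Symmetry gives t (i + n) = - t i, so the
  signs of t change at least twice, and self-intersections come in antipodal pairs: edge i + n is
  the antipode of edge i and never meets it. Hence 2 D+ + I >= 4 + 2 if D+ > 0. If Q is simple,
  start after a sign change t a < 0 < t (a + 1). The turns t (a + 1), ..., t (a + n - 1) cannot
  all be positive: otherwise u a, ..., u (a + n) = - u a would be a left-turning chain ending at
  the antipode of its start, and every such chain has two crossing non-adjacent edges (induction
  on its length, cutting off the first triangle). So each half of Q has three sign changes.
*)
theory Submission
  imports Defs
begin

section \<open>Triple products\<close>

lemma det3_coordinates:
  "det3 a b c = a$1 * (b$2 * c$3 - b$3 * c$2) + a$2 * (b$3 * c$1 - b$1 * c$3)
    + a$3 * (b$1 * c$2 - b$2 * c$1)"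
  unfolding det3_def cross3_def by (simp add: inner_vec_def sum_3 algebra_simps)

lemma det3_rotate: "det3 a b c = det3 b c a"
  by (simp add: det3_coordinates algebra_simps)

lemma det3_swap: "det3 a b c = - det3 b a c"
  by (simp add: det3_coordinates algebra_simps)

lemma det3_linear [simp]:
  "det3 (x + y) b c = det3 x b c + det3 y b c"
  "det3 a (x + y) c = det3 a x c + det3 a y c"
  "det3 a b (x + y) = det3 a b x + det3 a b y"
  "det3 (x - y) b c = det3 x b c - det3 y b c"
  "det3 a (x - y) c = det3 a x c - det3 a y c"
  "det3 a b (x - y) = det3 a b x - det3 a b y"
  "det3 (r *\<^sub>R x) b c = r * det3 x b c"
  "det3 a (r *\<^sub>R x) c = r * det3 a x c"
  "det3 a b (r *\<^sub>R x) = r * det3 a b x"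
  "det3 (- x) b c = - det3 x b c"
  "det3 a (- x) c = - det3 a x c"
  "det3 a b (- x) = - det3 a b x"
  by (simp_all add: det3_coordinates algebra_simps)

lemma det3_degenerate [simp]:
  "det3 a a c = 0" "det3 a b a = 0" "det3 a b b = 0"
  "det3 0 b c = 0" "det3 a 0 c = 0" "det3 a b 0 = 0"
  by (simp_all add: det3_coordinates algebra_simps)

lemma det3_cramer:
  "det3 a b c *\<^sub>R x = det3 b c x *\<^sub>R a + det3 c a x *\<^sub>R b + det3 a b x *\<^sub>R c"
  by (simp add: vec_eq_iff forall_3 det3_coordinates algebra_simps)

lemma det3_nonzero_imp_independent:
  assumes "det3 a b c \<noteq> 0" "\<alpha> *\<^sub>R a + \<beta> *\<^sub>R b = 0"
  shows "\<alpha> = 0" "\<beta> = 0"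
proof -
  have "det3 (\<alpha> *\<^sub>R a + \<beta> *\<^sub>R b) b c = 0" "det3 a (\<alpha> *\<^sub>R a + \<beta> *\<^sub>R b) c = 0"
    using assms(2) by simp_all
  then show "\<alpha> = 0" "\<beta> = 0"
    using assms(1) by simp_all
qed

section \<open>Spherical arcs and their cones\<close>

text \<open>The arc sph_arc a b consists of the normalised nonzero points of arc_cone a b
  (lemma sgn_in_sph_arc), so whether two arcs meet can be decided linearly, with cones.\<close>

definition arc_cone :: "real^3 \<Rightarrow> real^3 \<Rightarrow> (real^3) set" where
  "arc_cone a b = {\<alpha> *\<^sub>R a + \<beta> *\<^sub>R b | \<alpha> \<beta>. 0 \<le> \<alpha> \<and> 0 \<le> \<beta>}"

definition cones_meet :: "real^3 \<Rightarrow> real^3 \<Rightarrow> real^3 \<Rightarrow> real^3 \<Rightarrow> bool" where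
  "cones_meet a b c d \<longleftrightarrow> (\<exists>Z. Z \<noteq> 0 \<and> Z \<in> arc_cone a b \<and> Z \<in> arc_cone c d)"

lemma arc_cone_commute: "arc_cone a b = arc_cone b a"
  unfolding arc_cone_def by (metis (no_types, opaque_lifting) add.commute)

lemma arc_coneI: "0 \<le> \<alpha> \<Longrightarrow> 0 \<le> \<beta> \<Longrightarrow> \<alpha> *\<^sub>R a + \<beta> *\<^sub>R b \<in> arc_cone a b"
  unfolding arc_cone_def by blast

lemma arc_coneE:
  assumes "Z \<in> arc_cone a b"
  obtains \<alpha> \<beta> where "0 \<le> \<alpha>" "0 \<le> \<beta>" "Z = \<alpha> *\<^sub>R a + \<beta> *\<^sub>R b"
  using assms unfolding arc_cone_def by blast

lemma generator_in_arc_cone: "a \<in> arc_cone a b" "b \<in> arc_cone a b"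
  using arc_coneI[of 1 0 a b] arc_coneI[of 0 1 a b] by simp_all

lemma arc_cone_scaleR: "0 \<le> r \<Longrightarrow> v \<in> arc_cone a b \<Longrightarrow> r *\<^sub>R v \<in> arc_cone a b"
  by (auto elim!: arc_coneE intro!: arc_coneI simp: scaleR_add_right)

lemma arc_cone_pointed:
  assumes "det3 a b c \<noteq> 0" "v \<in> arc_cone a b" "w \<in> arc_cone a b" "v + w = 0"
  shows "v = 0"
proof -
  obtain \<alpha> \<beta> \<gamma> \<delta> where "0 \<le> \<alpha>" "0 \<le> \<beta>" "0 \<le> \<gamma>" "0 \<le> \<delta>"
    and v: "v = \<alpha> *\<^sub>R a + \<beta> *\<^sub>R b" and w: "w = \<gamma> *\<^sub>R a + \<delta> *\<^sub>R b"
    using assms(2,3) by (auto elim!: arc_coneE)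
  have "(\<alpha> + \<gamma>) *\<^sub>R a + (\<beta> + \<delta>) *\<^sub>R b = 0"
    using assms(4) unfolding v w by (simp add: algebra_simps)
  then have "\<alpha> + \<gamma> = 0" "\<beta> + \<delta> = 0"
    using det3_nonzero_imp_independent[OF assms(1)] by blast+
  then have "\<alpha> = 0" "\<beta> = 0"
    using \<open>0 \<le> \<alpha>\<close> \<open>0 \<le> \<beta>\<close> \<open>0 \<le> \<gamma>\<close> \<open>0 \<le> \<delta>\<close> by linarith+
  then show ?thesis
    unfolding v by simp
qed

lemma segment_to_generator_in_arc_cone:
  assumes "det3 a b c \<noteq> 0" "Y \<in> arc_cone a b" "B \<in> {a, b}" "0 < t" "t \<le> 1"
  shows "(1 - t) *\<^sub>R Y + t *\<^sub>R B \<in> arc_cone a b" "(1 - t) *\<^sub>R Y + t *\<^sub>R B \<noteq> 0"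
proof -
  obtain \<alpha> \<beta> where "0 \<le> \<alpha>" "0 \<le> \<beta>" and Y: "Y = \<alpha> *\<^sub>R a + \<beta> *\<^sub>R b"
    using assms(2) by (rule arc_coneE)
  have "0 \<le> (1 - t) * \<alpha>" "0 \<le> (1 - t) * \<beta>"
    using \<open>0 \<le> \<alpha>\<close> \<open>0 \<le> \<beta>\<close> \<open>t \<le> 1\<close> by simp_all
  then obtain \<alpha>' \<beta>' where "0 \<le> \<alpha>'" "0 \<le> \<beta>'" "0 < \<alpha>' \<or> 0 < \<beta>'"
    and Z: "(1 - t) *\<^sub>R Y + t *\<^sub>R B = \<alpha>' *\<^sub>R a + \<beta>' *\<^sub>R b"
  proof (cases "B = a")
    case True
    show thesis
      by (rule that[of "(1 - t) * \<alpha> + t" "(1 - t) * \<beta>"])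
        (use \<open>0 \<le> (1 - t) * \<alpha>\<close> \<open>0 \<le> (1 - t) * \<beta>\<close> \<open>0 < t\<close> in \<open>auto simp: Y True algebra_simps\<close>)
  next
    case False
    then have "B = b" using assms(3) by simp
    show thesis
      by (rule that[of "(1 - t) * \<alpha>" "(1 - t) * \<beta> + t"])
        (use \<open>0 \<le> (1 - t) * \<alpha>\<close> \<open>0 \<le> (1 - t) * \<beta>\<close> \<open>0 < t\<close> in \<open>auto simp: Y \<open>B = b\<close> algebra_simps\<close>)
  qed
  show "(1 - t) *\<^sub>R Y + t *\<^sub>R B \<in> arc_cone a b"
    unfolding Z by (rule arc_coneI) fact+
  show "(1 - t) *\<^sub>R Y + t *\<^sub>R B \<noteq> 0"
    using det3_nonzero_imp_independent[OF assms(1), of \<alpha>' \<beta>'] \<open>0 < \<alpha>' \<or> 0 < \<beta>'\<close>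
    unfolding Z by auto
qed

lemma sph_arcE:
  assumes "x \<in> sph_arc a b"
  obtains t where "0 \<le> t" "t \<le> 1" "x = sgn ((1 - t) *\<^sub>R a + t *\<^sub>R b)"
  using assms unfolding sph_arc_def mem_Collect_eq by metis

lemma sph_arc_uminus: "sph_arc (- a) (- b) = uminus ` sph_arc a b"
proof -
  have "sph_arc (- a) (- b) = {- sgn ((1 - t) *\<^sub>R a + t *\<^sub>R b) | t. 0 \<le> t \<and> t \<le> 1}"
    unfolding sph_arc_def by (simp add: sgn_minus[symmetric] algebra_simps)
  also have "\<dots> = uminus ` sph_arc a b"
    unfolding sph_arc_def by auto
  finally show ?thesis .
qed

lemma sgn_in_sph_arc:
  assumes "Z \<in> arc_cone a b" "Z \<noteq> 0"
  shows "sgn Z \<in> sph_arc a b"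
proof -
  obtain \<alpha> \<beta> where "0 \<le> \<alpha>" "0 \<le> \<beta>" and Z: "Z = \<alpha> *\<^sub>R a + \<beta> *\<^sub>R b"
    using assms(1) by (rule arc_coneE)
  have "0 < \<alpha> + \<beta>"
  proof (rule ccontr)
    assume "\<not> 0 < \<alpha> + \<beta>"
    then have "\<alpha> = 0" "\<beta> = 0"
      using \<open>0 \<le> \<alpha>\<close> \<open>0 \<le> \<beta>\<close> by linarith+
    then show False
      using assms(2) Z by simp
  qed
  define t where "t = \<beta> / (\<alpha> + \<beta>)"
  have "(1 - t) *\<^sub>R a + t *\<^sub>R b = (1 / (\<alpha> + \<beta>)) *\<^sub>R Z"
    using \<open>0 < \<alpha> + \<beta>\<close> unfolding Z t_def by (simp add: field_simps scaleR_add_right)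
  then have "sgn ((1 - t) *\<^sub>R a + t *\<^sub>R b) = sgn Z"
    using \<open>0 < \<alpha> + \<beta>\<close> by (simp add: sgn_scaleR)
  moreover have "0 \<le> t" "t \<le> 1"
    using \<open>0 \<le> \<alpha>\<close> \<open>0 \<le> \<beta>\<close> \<open>0 < \<alpha> + \<beta>\<close> unfolding t_def by auto
  ultimately show ?thesis
    unfolding sph_arc_def by force
qed

lemma sph_arcs_meet_if_cones_meet: "cones_meet a b c d \<Longrightarrow> sph_arc a b \<inter> sph_arc c d \<noteq> {}"
  unfolding cones_meet_def using sgn_in_sph_arc by blast

lemma sph_arc_antipodal_disjoint:
  assumes "det3 a b c \<noteq> 0"
  shows "sph_arc a b \<inter> uminus ` sph_arc a b = {}"
proof -
  have sgn_point: "\<exists>v. v \<in> arc_cone a b \<and> v \<noteq> 0 \<and> x = sgn v" if x: "x \<in> sph_arc a b" for x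
  proof -
    obtain t where "0 \<le> t" "t \<le> 1" and x: "x = sgn ((1 - t) *\<^sub>R a + t *\<^sub>R b)"
      using x by (rule sph_arcE)
    define v where "v = (1 - t) *\<^sub>R a + t *\<^sub>R b"
    have "v \<noteq> 0"
    proof
      assume "v = 0"
      then have "1 - t = 0" "t = 0"
        unfolding v_def by (fact det3_nonzero_imp_independent[OF assms])+
      then show False by simp
    qed
    moreover have "v \<in> arc_cone a b"
      unfolding v_def using \<open>0 \<le> t\<close> \<open>t \<le> 1\<close> by (intro arc_coneI) simp_all
    ultimately show ?thesis
      using x unfolding v_def[symmetric] by blast
  qed
  have "False" if x: "x \<in> sph_arc a b" "- x \<in> sph_arc a b" for x
  proof -
    obtain v where v: "v \<in> arc_cone a b" "v \<noteq> 0" "x = sgn v"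
      using sgn_point[OF x(1)] by blast
    obtain w where w: "w \<in> arc_cone a b" "- x = sgn w"
      using sgn_point[OF x(2)] by blast
    have "sgn v \<in> arc_cone a b" "sgn w \<in> arc_cone a b"
      unfolding sgn_div_norm using v(1) w(1) by (simp_all add: arc_cone_scaleR)
    moreover have "sgn v + sgn w = 0"
      using v(3) w(2) by (metis add.right_inverse)
    ultimately have "sgn v = 0"
      by (rule arc_cone_pointed[OF assms])
    then show False
      using v(2) by (simp add: sgn_zero_iff)
  qed
  then show ?thesis
    by blast
qed

section \<open>Leaving a triangle\<close>

lemma in_arc_cone_if_on_side:
  assumes "0 < det3 a b c" "det3 a b Z = 0" "0 \<le> det3 b c Z" "0 \<le> det3 c a Z"
  shows "Z \<in> arc_cone a b"
proof -
  have "det3 a b c *\<^sub>R Z = det3 b c Z *\<^sub>R a + det3 c a Z *\<^sub>R b"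
    using det3_cramer[of a b c Z] assms(2) by simp
  then have "Z = (1 / det3 a b c) *\<^sub>R (det3 b c Z *\<^sub>R a + det3 c a Z *\<^sub>R b)"
    using assms(1) by (metis less_irrefl scaleR_scaleR nonzero_divide_eq_eq scaleR_one)
  then have "Z = (det3 b c Z / det3 a b c) *\<^sub>R a + (det3 c a Z / det3 a b c) *\<^sub>R b"
    by (simp add: scaleR_add_right)
  then show ?thesis
    using assms(1,3,4) arc_coneI[of "det3 b c Z / det3 a b c" "det3 c a Z / det3 a b c" a b] by simp
qed

lemma first_exit_time:
  fixes f g :: "'i \<Rightarrow> real"
  assumes "finite I" "\<forall>i\<in>I. 0 \<le> f i" "\<exists>i\<in>I. g i < 0" "\<forall>i\<in>I. g i < 0 \<longrightarrow> 0 < f i"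
  obtains t i where "0 < t" "t < 1" "\<forall>j\<in>I. 0 \<le> (1 - t) * f j + t * g j"
    "i \<in> I" "g i < 0" "(1 - t) * f i + t * g i = 0"
proof -
  define J where "J = {i\<in>I. g i < 0}"
  define c where "c i = f i / (f i - g i)" for i
  have c: "0 < c i" "c i < 1" "(1 - c i) * f i + c i * g i = 0" if "i \<in> J" for i
    using that assms(4) unfolding J_def c_def by (auto simp: field_simps)
  have "finite J" "J \<noteq> {}"
    using assms(1,3) unfolding J_def by auto
  define t where "t = Min (c ` J)"
  have "t \<in> c ` J"
    unfolding t_def using \<open>finite J\<close> \<open>J \<noteq> {}\<close> by (intro Min_in) auto
  then obtain i where "i \<in> J" "t = c i"
    by blast
  have t_le: "t \<le> c j" if "j \<in> J" for j
    unfolding t_def using \<open>finite J\<close> that by simp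
  have "0 \<le> (1 - t) * f j + t * g j" if "j \<in> I" for j
  proof (cases "j \<in> J")
    case True
    then have "t * (f j - g j) \<le> c j * (f j - g j)"
      using t_le[OF True] assms(2) unfolding J_def by (intro mult_right_mono) auto
    then show ?thesis
      using c(3)[OF True] by (simp add: algebra_simps)
  next
    case False
    then show ?thesis
      using that assms(2) c[OF \<open>i \<in> J\<close>] \<open>t = c i\<close> unfolding J_def by simp
  qed
  then show thesis
    using that[of t i] c[OF \<open>i \<in> J\<close>] \<open>i \<in> J\<close> \<open>t = c i\<close> unfolding J_def by auto
qed

lemma segment_leaves_triangle:
  assumes "0 < det3 a b c"
    and "0 \<le> det3 a b Y" "0 \<le> det3 b c Y" "0 \<le> det3 c a Y"
    and "det3 a b B < 0 \<or> det3 b c B < 0 \<or> det3 c a B < 0"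
    and "det3 a b B < 0 \<Longrightarrow> 0 < det3 a b Y" "det3 b c B < 0 \<Longrightarrow> 0 < det3 b c Y"
      "det3 c a B < 0 \<Longrightarrow> 0 < det3 c a Y"
  obtains t where "0 < t" "t < 1"
    "det3 a b B < 0 \<and> (1 - t) *\<^sub>R Y + t *\<^sub>R B \<in> arc_cone a b
     \<or> det3 b c B < 0 \<and> (1 - t) *\<^sub>R Y + t *\<^sub>R B \<in> arc_cone b c
     \<or> det3 c a B < 0 \<and> (1 - t) *\<^sub>R Y + t *\<^sub>R B \<in> arc_cone c a"
proof -
  let ?sides = "{(a, b), (b, c), (c, a)}"
  obtain t s where t: "0 < t" "t < 1"
    and nonneg: "\<forall>(x, y)\<in>?sides. 0 \<le> (1 - t) * det3 x y Y + t * det3 x y B"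
    and s: "s \<in> ?sides" "case s of (x, y) \<Rightarrow> det3 x y B < 0"
      "case s of (x, y) \<Rightarrow> (1 - t) * det3 x y Y + t * det3 x y B = 0"
    by (rule first_exit_time[of ?sides "\<lambda>(x, y). det3 x y Y" "\<lambda>(x, y). det3 x y B"])
      (use assms(2-8) in auto)
  define Z where "Z = (1 - t) *\<^sub>R Y + t *\<^sub>R B"
  have Z_nonneg: "0 \<le> det3 a b Z" "0 \<le> det3 b c Z" "0 \<le> det3 c a Z"
    using nonneg by (simp_all add: Z_def)
  have "det3 a b c = det3 b c a" "det3 a b c = det3 c a b"
    by (rule det3_rotate, metis det3_rotate)
  with assms(1) have "0 < det3 b c a" "0 < det3 c a b"
    by simp_all
  from s consider "s = (a, b)" | "s = (b, c)" | "s = (c, a)"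
    by blast
  then show thesis
    using s in_arc_cone_if_on_side[of a b c Z] in_arc_cone_if_on_side[of b c a Z]
      in_arc_cone_if_on_side[of c a b Z] Z_nonneg \<open>0 < det3 b c a\<close> \<open>0 < det3 c a b\<close> assms(1)
    by cases (auto intro: that[OF t] simp: Z_def)
qed

section \<open>Left-turning chains ending at the antipode\<close>

definition general_position :: "(nat \<Rightarrow> real^3) \<Rightarrow> nat \<Rightarrow> bool" where
  "general_position p k \<longleftrightarrow>
     (\<forall>x<k. \<forall>y<k. \<forall>z<k. x \<noteq> y \<and> y \<noteq> z \<and> x \<noteq> z \<longrightarrow> det3 (p x) (p y) (p z) \<noteq> 0)"

definition left_turning :: "(nat \<Rightarrow> real^3) \<Rightarrow> nat \<Rightarrow> bool" where
  "left_turning p k \<longleftrightarrow> (\<forall>i. 0 < i \<and> i < k \<longrightarrow> 0 < det3 (p (i - 1)) (p i) (p (Suc i)))"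

definition has_crossing :: "(nat \<Rightarrow> real^3) \<Rightarrow> nat \<Rightarrow> bool" where
  "has_crossing p k \<longleftrightarrow>
     (\<exists>i j. i + 2 \<le> j \<and> j < k \<and> cones_meet (p i) (p (Suc i)) (p j) (p (Suc j)))"

lemma general_position_reindex:
  assumes "general_position p k" "\<And>i. i < k' \<Longrightarrow> f i < k" "inj_on f {..<k'}"
    "\<And>i. i < k' \<Longrightarrow> q i = p (f i)"
  shows "general_position q k'"
  unfolding general_position_def
proof (intro allI impI)
  fix x y z
  assume "x < k'" "y < k'" "z < k'" "x \<noteq> y \<and> y \<noteq> z \<and> x \<noteq> z"
  then have "f x \<noteq> f y" "f y \<noteq> f z" "f x \<noteq> f z"
    using assms(3) unfolding inj_on_def by auto
  then show "det3 (q x) (q y) (q z) \<noteq> 0"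
    using assms(1,2,4) \<open>x < k'\<close> \<open>y < k'\<close> \<open>z < k'\<close> unfolding general_position_def by auto
qed

text \<open>A minimal counterexample to the theorem below. Later edges cannot cross the sides p 0 p 1
  and p 1 p 2 of the first triangle, and the end point - p 0 lies outside it, so an edge that
  enters the triangle is followed by one leaving it across the chord p 0 p 2 (a chord exit).
  Replacing p 1, ..., p (j - 1) by the chord p 0 p j yields a shorter chain, which must cross;
  for j = 2 and for the last chord exit j, the crossing involves the new edge and produces a
  further chord exit.\<close>

locale minimal_crossing_free_chain =
  fixes p :: "nat \<Rightarrow> real^3" and k :: nat
  assumes k_ge_4: "4 \<le> k"
    and antipodal_end: "p k = - p 0"
    and general: "general_position p k"
    and turning: "left_turning p k"
    and no_crossing: "\<not> has_crossing p k"
    and shorter_chains_cross: "\<And>k' q. k' < k \<Longrightarrow> 2 \<le> k' \<Longrightarrow> q k' = - q 0 \<Longrightarrow>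
      general_position q k' \<Longrightarrow> left_turning q k' \<Longrightarrow> has_crossing q k'"
begin

lemma det_nonzero:
  "x < k \<Longrightarrow> y < k \<Longrightarrow> z < k \<Longrightarrow> x \<noteq> y \<Longrightarrow> y \<noteq> z \<Longrightarrow> x \<noteq> z \<Longrightarrow>
    det3 (p x) (p y) (p z) \<noteq> 0"
  using general unfolding general_position_def by blast

lemma turn_pos: "0 < i \<Longrightarrow> i < k \<Longrightarrow> 0 < det3 (p (i - 1)) (p i) (p (Suc i))"
  using turning unfolding left_turning_def by blast

lemma no_meet: "i + 2 \<le> j \<Longrightarrow> j < k \<Longrightarrow> \<not> cones_meet (p i) (p (Suc i)) (p j) (p (Suc j))"
  using no_crossing unfolding has_crossing_def by blast

lemma first_turn_pos: "0 < det3 (p 0) (p 1) (p 2)"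
  using turn_pos[of 1] k_ge_4 by (simp add: numeral_2_eq_2)

lemma end_outside: "det3 (p 1) (p 2) (p k) < 0"
  using first_turn_pos det3_rotate[of "p 0" "p 1" "p 2"] by (simp add: antipodal_end del: One_nat_def)

lemma edge_det_nonzero:
  assumes "3 \<le> m" "m < k"
  shows "det3 (p m) (p (Suc m)) (p 1) \<noteq> 0"
proof (cases "Suc m < k")
  case True
  then show ?thesis using det_nonzero assms by simp
next
  case False
  then have "Suc m = k" using assms by simp
  then have "p (Suc m) = - p 0" using antipodal_end by simp
  then show ?thesis using det_nonzero[of m 0 1] assms by simp
qed

lemma edge_misses_first_edges:
  assumes "3 \<le> m" "m < k" "Z \<noteq> 0" "Z \<in> arc_cone (p m) (p (Suc m))"
  shows "Z \<notin> arc_cone (p 0) (p 1)" "Z \<notin> arc_cone (p 1) (p 2)"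
  using no_meet[of 0 m] no_meet[of 1 m] assms unfolding cones_meet_def
  by (auto simp: numeral_2_eq_2)

lemma first_turn_rotations: "0 < det3 (p 1) (p 2) (p 0)" "0 < det3 (p 2) (p 0) (p 1)"
  using first_turn_pos det3_rotate[of "p 0" "p 1" "p 2"] det3_rotate[of "p 1" "p 2" "p 0"] by simp_all

lemma chord_orientation: "det3 (p 2) (p 0) x = - det3 (p 0) (p 2) x"
  by (rule det3_swap)

definition in_first_triangle :: "real^3 \<Rightarrow> bool" where
  "in_first_triangle Y \<longleftrightarrow>
     0 < det3 (p 0) (p 1) Y \<and> 0 < det3 (p 1) (p 2) Y \<and> 0 < det3 (p 2) (p 0) Y"

definition chord_exit :: "nat \<Rightarrow> bool" where
  "chord_exit l \<longleftrightarrow> 3 \<le> l \<and> l < k \<and> 0 < det3 (p 0) (p 2) (p (Suc l))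
     \<and> cones_meet (p 0) (p 2) (p l) (p (Suc l))"

lemma vertex_position:
  assumes "3 \<le> i" "i \<le> k"
  shows "in_first_triangle (p i) \<or> det3 (p 0) (p 1) (p i) < 0 \<or> det3 (p 1) (p 2) (p i) < 0
    \<or> det3 (p 2) (p 0) (p i) < 0"
proof (cases "i = k")
  case True
  then show ?thesis using end_outside by simp
next
  case False
  then have "det3 (p 0) (p 1) (p i) \<noteq> 0" "det3 (p 1) (p 2) (p i) \<noteq> 0" "det3 (p 2) (p 0) (p i) \<noteq> 0"
    using det_nonzero[of 0 1 i] det_nonzero[of 1 2 i] det_nonzero[of 2 0 i] assms by auto
  then show ?thesis unfolding in_first_triangle_def by linarith
qed

lemma edge_exits_through_chord:
  assumes "3 \<le> m" "m < k" "Y \<in> arc_cone (p m) (p (Suc m))" "B \<in> {p m, p (Suc m)}"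
    and "0 < det3 (p 0) (p 1) Y" "0 < det3 (p 1) (p 2) Y" "0 \<le> det3 (p 2) (p 0) Y"
    and "det3 (p 0) (p 1) B < 0 \<or> det3 (p 1) (p 2) B < 0 \<or> det3 (p 2) (p 0) B < 0"
    and "det3 (p 2) (p 0) B < 0 \<Longrightarrow> 0 < det3 (p 2) (p 0) Y"
  shows "det3 (p 2) (p 0) B < 0 \<and> cones_meet (p 0) (p 2) (p m) (p (Suc m))"
proof -
  obtain t where t: "0 < t" "t < 1"
    and side: "det3 (p 0) (p 1) B < 0 \<and> (1 - t) *\<^sub>R Y + t *\<^sub>R B \<in> arc_cone (p 0) (p 1)
      \<or> det3 (p 1) (p 2) B < 0 \<and> (1 - t) *\<^sub>R Y + t *\<^sub>R B \<in> arc_cone (p 1) (p 2)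
      \<or> det3 (p 2) (p 0) B < 0 \<and> (1 - t) *\<^sub>R Y + t *\<^sub>R B \<in> arc_cone (p 2) (p 0)"
    by (rule segment_leaves_triangle[OF first_turn_pos, of Y B]) (use assms(5-9) in auto)
  define Z where "Z = (1 - t) *\<^sub>R Y + t *\<^sub>R B"
  have "Z \<in> arc_cone (p m) (p (Suc m))" "Z \<noteq> 0"
    using segment_to_generator_in_arc_cone[OF edge_det_nonzero[OF assms(1,2)] assms(3,4) t(1)] t(2)
    unfolding Z_def by simp_all
  then have "Z \<notin> arc_cone (p 0) (p 1)" "Z \<notin> arc_cone (p 1) (p 2)"
    using edge_misses_first_edges assms(1,2) by blast+
  then show ?thesis
    using side \<open>Z \<in> arc_cone (p m) (p (Suc m))\<close> \<open>Z \<noteq> 0\<close>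
    unfolding Z_def[symmetric] cones_meet_def by (auto simp: arc_cone_commute)
qed

lemma chord_exit_after:
  assumes "3 \<le> m" "m < k" "Y \<in> arc_cone (p m) (p (Suc m))"
    and "0 < det3 (p 0) (p 1) Y" "0 < det3 (p 1) (p 2) Y" "0 \<le> det3 (p 2) (p 0) Y"
  shows "\<exists>l\<ge>m. chord_exit l"
  using assms
proof (induction "k - m" arbitrary: m Y rule: less_induct)
  case less
  from vertex_position[of "Suc m"] less.prems(1,2) consider
    "in_first_triangle (p (Suc m))"
    | "det3 (p 0) (p 1) (p (Suc m)) < 0 \<or> det3 (p 1) (p 2) (p (Suc m)) < 0
        \<or> det3 (p 2) (p 0) (p (Suc m)) < 0"
    by fastforce
  then show ?case
  proof cases
    case 1
    then have "Suc m \<noteq> k"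
      using end_outside unfolding in_first_triangle_def by auto
    then obtain l where "Suc m \<le> l" "chord_exit l"
      using less.hyps[of "Suc m" "p (Suc m)"] 1 generator_in_arc_cone less.prems(1,2)
      unfolding in_first_triangle_def by fastforce
    then show ?thesis by (auto intro: Suc_leD)
  next
    case 2
    show ?thesis
    proof (cases "det3 (p 2) (p 0) (p (Suc m)) < 0 \<and> det3 (p 2) (p 0) Y = 0")
      case True
      have "Y \<in> arc_cone (p 0) (p 2)"
        using in_arc_cone_if_on_side[OF first_turn_rotations(2)] True less.prems(4,5)
        by (simp add: arc_cone_commute)
      moreover have "Y \<noteq> 0"
        using less.prems(4) by auto
      ultimately have "chord_exit m"
        using True less.prems(1-3) chord_orientation
        unfolding chord_exit_def cones_meet_def by auto
      then show ?thesis by blast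
    next
      case False
      then have "det3 (p 2) (p 0) (p (Suc m)) < 0 \<and> cones_meet (p 0) (p 2) (p m) (p (Suc m))"
        using edge_exits_through_chord[of m Y "p (Suc m)"] 2 less.prems by auto
      then have "chord_exit m"
        using less.prems(1,2) chord_orientation unfolding chord_exit_def by auto
      then show ?thesis by blast
    qed
  qed
qed

lemma chord_crossing_inside:
  assumes "3 \<le> m" "m < k" "Y \<noteq> 0" "Y \<in> arc_cone (p 0) (p 2)" "Y \<in> arc_cone (p m) (p (Suc m))"
  shows "0 < det3 (p 0) (p 1) Y" "0 < det3 (p 1) (p 2) Y"
proof -
  obtain \<alpha> \<beta> where "0 \<le> \<alpha>" "0 \<le> \<beta>" and Y: "Y = \<alpha> *\<^sub>R p 0 + \<beta> *\<^sub>R p 2"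
    using assms(4) by (rule arc_coneE)
  have "Y \<notin> arc_cone (p 0) (p 1)" "Y \<notin> arc_cone (p 1) (p 2)"
    using edge_misses_first_edges assms(1,2,3,5) by blast+
  then have "\<beta> \<noteq> 0" "\<alpha> \<noteq> 0"
    using arc_coneI[OF \<open>0 \<le> \<alpha>\<close> order_refl, of "p 0" "p 1"]
      arc_coneI[OF order_refl \<open>0 \<le> \<beta>\<close>, of "p 1" "p 2"] unfolding Y by auto
  then show "0 < det3 (p 0) (p 1) Y" "0 < det3 (p 1) (p 2) Y"
    using \<open>0 \<le> \<alpha>\<close> \<open>0 \<le> \<beta>\<close> first_turn_pos first_turn_rotations(1) unfolding Y by simp_all
qed

lemma shortcut_crosses:
  assumes "2 \<le> j" "Suc j < k" "0 < det3 (p 0) (p j) (p (Suc j))"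
  shows "\<exists>m. j < m \<and> m < k \<and> cones_meet (p 0) (p j) (p m) (p (Suc m))"
proof -
  define q where "q i = (if i = 0 then p 0 else p (i + j - 1))" for i
  define k' where "k' = k + 1 - j"
  have "has_crossing q k'"
  proof (rule shorter_chains_cross)
    show "k' < k" "2 \<le> k'"
      using assms unfolding k'_def by auto
    show "q k' = - q 0"
      using antipodal_end assms unfolding q_def k'_def by auto
    show "general_position q k'"
      by (rule general_position_reindex[OF general, of _ "\<lambda>i. if i = 0 then 0 else i + j - 1"])
        (use assms in \<open>auto simp: q_def k'_def inj_on_def\<close>)
    show "left_turning q k'"
      unfolding left_turning_def
    proof (intro allI impI)
      fix i
      assume i: "0 < i \<and> i < k'"
      show "0 < det3 (q (i - 1)) (q i) (q (Suc i))"
      proof (cases "i = 1")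
        case True
        then show ?thesis using assms(3) by (simp add: q_def)
      next
        case False
        then have "q (i - 1) = p (i + j - 1 - 1)" "q i = p (i + j - 1)" "q (Suc i) = p (Suc (i + j - 1))"
          using i assms(1) unfolding q_def by auto
        moreover have "0 < i + j - 1" "i + j - 1 < k"
          using i assms(1) unfolding k'_def by auto
        ultimately show ?thesis
          using turn_pos[of "i + j - 1"] by simp
      qed
    qed
  qed
  then obtain a b where ab: "a + 2 \<le> b" "b < k'" "cones_meet (q a) (q (Suc a)) (q b) (q (Suc b))"
    unfolding has_crossing_def by blast
  have qb: "q b = p (b + j - 1)" "q (Suc b) = p (Suc (b + j - 1))"
    using ab assms(1) unfolding q_def by auto
  show ?thesis
  proof (cases "a = 0")
    case True
    then show ?thesis
      using ab qb assms(1) by (intro exI[of _ "b + j - 1"]) (auto simp: q_def k'_def)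
  next
    case False
    then have "cones_meet (p (a + j - 1)) (p (Suc (a + j - 1))) (p (b + j - 1)) (p (Suc (b + j - 1)))"
      using ab qb assms(1) unfolding q_def by simp
    moreover have "a + j - 1 + 2 \<le> b + j - 1" "b + j - 1 < k"
      using ab assms(1) unfolding k'_def by auto
    ultimately show ?thesis
      using no_meet by blast
  qed
qed

lemma chord_exit_exists: "\<exists>l. chord_exit l"
proof -
  have "det3 (p 0) (p 2) (p 3) \<noteq> 0" "det3 (p 0) (p 1) (p 3) \<noteq> 0"
    using det_nonzero[of 0 2 3] det_nonzero[of 0 1 3] k_ge_4 by simp_all
  then consider "0 < det3 (p 0) (p 2) (p 3)"
    | "det3 (p 0) (p 2) (p 3) < 0" "0 < det3 (p 0) (p 1) (p 3)"
    | "det3 (p 0) (p 2) (p 3) < 0" "det3 (p 0) (p 1) (p 3) < 0"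
    by linarith
  moreover have "0 < det3 (p 1) (p 2) (p 3)"
    using turn_pos[of 2] k_ge_4 by (simp add: numeral_3_eq_3)
  ultimately show ?thesis
  proof cases
    case 1
    then obtain m Y where m: "2 < m" "m < k" and Y: "Y \<noteq> 0" "Y \<in> arc_cone (p 0) (p 2)"
      "Y \<in> arc_cone (p m) (p (Suc m))"
      using shortcut_crosses[of 2] k_ge_4 unfolding cones_meet_def by auto
    have "det3 (p 2) (p 0) Y = 0"
      using Y(2) by (auto elim: arc_coneE)
    with m Y show ?thesis
      using chord_crossing_inside[of m Y] chord_exit_after[of m Y] by auto
  next
    case 2
    then have "0 < det3 (p 2) (p 0) (p 3)"
      using chord_orientation by simp
    then show ?thesis
      using chord_exit_after[of 3 "p 3"] 2 \<open>0 < det3 (p 1) (p 2) (p 3)\<close>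
        generator_in_arc_cone(1) k_ge_4 by auto
  next
    case 3
    define W where "W = det3 (p 1) (p 2) (p 3) *\<^sub>R p 0 + (- det3 (p 0) (p 2) (p 3)) *\<^sub>R p 1"
    have W_eq: "W = (- det3 (p 0) (p 1) (p 3)) *\<^sub>R p 2 + det3 (p 0) (p 1) (p 2) *\<^sub>R p 3"
      using det3_cramer[of "p 0" "p 1" "p 2" "p 3"] chord_orientation[of "p 3"]
      unfolding W_def by (simp add: algebra_simps)
    have "W \<in> arc_cone (p 2) (p 3)"
      unfolding W_eq by (rule arc_coneI) (use 3 first_turn_pos in simp_all)
    moreover have "W \<in> arc_cone (p 0) (p 1)"
      unfolding W_def by (rule arc_coneI) (use 3 \<open>0 < det3 (p 1) (p 2) (p 3)\<close> in simp_all)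
    moreover have "W \<noteq> 0"
    proof
      assume "W = 0"
      then have "det3 (p 1) (p 2) (p 3) = 0"
        using det3_nonzero_imp_independent(1)[of "p 0" "p 1" "p 2", OF _ \<open>W = 0\<close>[unfolded W_def]]
          first_turn_pos by simp
      then show False
        using \<open>0 < det3 (p 1) (p 2) (p 3)\<close> by simp
    qed
    ultimately have "cones_meet (p 0) (p 1) (p 2) (p 3)"
      unfolding cones_meet_def by blast
    then show ?thesis
      using no_meet[of 0 2] k_ge_4 by (simp add: numeral_3_eq_3)
  qed
qed

lemma chord_exit_before_end:
  assumes "chord_exit j"
  shows "Suc j < k"
proof (rule ccontr)
  assume "\<not> Suc j < k"
  then have "Suc j = k"
    using assms unfolding chord_exit_def by simp
  then have "p (Suc j) = - p 0"
    using antipodal_end by simp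
  then show False
    using assms unfolding chord_exit_def by simp
qed

lemma chord_exit_vertex_inside:
  assumes "chord_exit j"
  shows "in_first_triangle (p j)" "0 < det3 (p 0) (p j) (p (Suc j))"
proof -
  obtain Z where j: "3 \<le> j" "j < k" and exit_pos: "0 < det3 (p 0) (p 2) (p (Suc j))"
    and Z: "Z \<noteq> 0" "Z \<in> arc_cone (p 0) (p 2)" "Z \<in> arc_cone (p j) (p (Suc j))"
    using assms unfolding chord_exit_def cones_meet_def by blast
  obtain \<sigma> \<tau> where "0 \<le> \<sigma>" "0 \<le> \<tau>" and Z_chord: "Z = \<sigma> *\<^sub>R p 0 + \<tau> *\<^sub>R p 2"
    using Z(2) by (rule arc_coneE)
  obtain \<alpha> \<beta> where "0 \<le> \<alpha>" "0 \<le> \<beta>" and Z_edge: "Z = \<alpha> *\<^sub>R p j + \<beta> *\<^sub>R p (Suc j)"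
    using Z(3) by (rule arc_coneE)
  have Z_inside: "0 < det3 (p 0) (p 1) Z" "0 < det3 (p 1) (p 2) Z" "det3 (p 2) (p 0) Z = 0"
    using chord_crossing_inside[OF j Z] Z_chord by simp_all
  then have "0 < \<tau>"
    using \<open>0 \<le> \<tau>\<close> unfolding Z_chord by (cases "\<tau> = 0") simp_all
  have "\<alpha> * det3 (p 0) (p j) (p (Suc j)) = \<tau> * det3 (p 0) (p 2) (p (Suc j))"
    using arg_cong[of _ _ "\<lambda>x. det3 (p 0) x (p (Suc j))", OF Z_edge[symmetric, unfolded Z_chord]]
    by simp
  then have "0 < \<alpha> * det3 (p 0) (p j) (p (Suc j))"
    using \<open>0 < \<tau>\<close> exit_pos by simp
  then show "0 < det3 (p 0) (p j) (p (Suc j))"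
    using \<open>0 \<le> \<alpha>\<close> by (simp add: zero_less_mult_iff)
  have "0 < \<alpha>"
    using \<open>0 < \<alpha> * det3 (p 0) (p j) (p (Suc j))\<close> \<open>0 \<le> \<alpha>\<close> by (simp add: zero_less_mult_iff)
  have "det3 (p 0) (p 2) (p j) \<noteq> 0"
    using det_nonzero[of 0 2 j] j by simp
  have chord_eq: "\<alpha> * det3 (p 0) (p 2) (p j) + \<beta> * det3 (p 0) (p 2) (p (Suc j)) = 0"
    using arg_cong[of _ _ "det3 (p 0) (p 2)", OF Z_edge[symmetric, unfolded Z_chord]] by simp
  then have "\<beta> \<noteq> 0"
    using \<open>0 < \<alpha>\<close> \<open>det3 (p 0) (p 2) (p j) \<noteq> 0\<close> by auto
  then have "0 < \<beta> * det3 (p 0) (p 2) (p (Suc j))"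
    using \<open>0 \<le> \<beta>\<close> exit_pos by (simp add: zero_less_mult_iff)
  then have "\<alpha> * det3 (p 0) (p 2) (p j) < 0"
    using chord_eq by linarith
  then have "0 < det3 (p 2) (p 0) (p j)"
    using \<open>0 < \<alpha>\<close> chord_orientation by (simp add: mult_less_0_iff)
  then show "in_first_triangle (p j)"
    using vertex_position[of j] edge_exits_through_chord[OF j Z(3), of "p j"] Z_inside j by auto
qed

lemma inconsistent: False
proof -
  obtain l0 where "chord_exit l0"
    using chord_exit_exists by blast
  have bounded: "chord_exit l \<Longrightarrow> l \<le> k" for l
    unfolding chord_exit_def by simp
  define j where "j = (GREATEST l. chord_exit l)"
  have "chord_exit j"
    unfolding j_def using GreatestI_nat[of chord_exit l0 k] \<open>chord_exit l0\<close> bounded by blast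
  have last: "l \<le> j" if "chord_exit l" for l
    unfolding j_def using Greatest_le_nat[of chord_exit l k] that bounded by blast
  have "2 \<le> j" using \<open>chord_exit j\<close> unfolding chord_exit_def by simp
  then obtain m Y where m: "j < m" "m < k" and Y: "Y \<noteq> 0" "Y \<in> arc_cone (p 0) (p j)"
    "Y \<in> arc_cone (p m) (p (Suc m))"
    using shortcut_crosses chord_exit_before_end[OF \<open>chord_exit j\<close>]
      chord_exit_vertex_inside(2)[OF \<open>chord_exit j\<close>]
    unfolding cones_meet_def by blast
  obtain \<alpha> \<beta> where "0 \<le> \<alpha>" "0 \<le> \<beta>" and Y_eq: "Y = \<alpha> *\<^sub>R p 0 + \<beta> *\<^sub>R p j"
    using Y(2) by (rule arc_coneE)
  have "3 \<le> m" using \<open>2 \<le> j\<close> m by simp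
  have "Y \<notin> arc_cone (p 0) (p 1)"
    using edge_misses_first_edges(1)[OF \<open>3 \<le> m\<close> m(2) Y(1,3)] .
  moreover have "\<alpha> *\<^sub>R p 0 + 0 *\<^sub>R p 1 \<in> arc_cone (p 0) (p 1)"
    using \<open>0 \<le> \<alpha>\<close> by (intro arc_coneI) simp_all
  ultimately have "0 < \<beta>"
    using \<open>0 \<le> \<beta>\<close> Y_eq by (cases "\<beta> = 0") simp_all
  then have "0 < det3 (p 0) (p 1) Y" "0 < det3 (p 1) (p 2) Y" "0 < det3 (p 2) (p 0) Y"
    using chord_exit_vertex_inside(1)[OF \<open>chord_exit j\<close>] first_turn_rotations(1) \<open>0 \<le> \<alpha>\<close>
    unfolding Y_eq in_first_triangle_def by (simp_all add: add_nonneg_pos)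
  then obtain l where "m \<le> l" "chord_exit l"
    using chord_exit_after[OF \<open>3 \<le> m\<close> m(2) Y(3)] by auto
  then show False
    using last m(1) by fastforce
qed

end

theorem left_turning_chain_to_antipode_crosses:
  assumes "2 \<le> k" "p k = - p 0" "general_position p k" "left_turning p k"
  shows "has_crossing p k"
  using assms
proof (induction k arbitrary: p rule: less_induct)
  case (less k p)
  have turn: "0 < det3 (p (i - 1)) (p i) (p (Suc i))" if "0 < i" "i < k" for i
    using less.prems(4) that unfolding left_turning_def by blast
  consider "k = 2" | "k = 3" | "4 \<le> k"
    using less.prems(1) by linarith
  then show ?case
  proof cases
    case 1
    then show ?thesis
      using turn[of 1] less.prems(2) by (simp add: numeral_2_eq_2)
  next
    case 2
    have "det3 (p 1) (p 2) (p 0) = det3 (p 0) (p 1) (p 2)"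
      by (metis det3_rotate)
    then show ?thesis
      using turn[of 1] turn[of 2] less.prems(2) 2 by (simp add: numeral_2_eq_2 numeral_3_eq_3)
  next
    case 3
    show ?thesis
    proof (rule ccontr)
      assume "\<not> has_crossing p k"
      then interpret minimal_crossing_free_chain p k
        using 3 less by unfold_locales auto
      show False by (rule inconsistent)
    qed
  qed
qed

section \<open>Symmetric polygons\<close>

lemma mod_neq_in_window:
  fixes x y m :: nat
  assumes "a \<le> x" "x < a + m" "a \<le> y" "y < a + m" "x \<noteq> y"
  shows "x mod m \<noteq> y mod m"
proof
  assume eq: "x mod m = y mod m"
  consider "x < y" | "y < x"
    using assms(5) by linarith
  then show False
  proof cases
    case 1
    then have "m dvd y - x"
      using eq mod_eq_dvd_iff_nat[of x y m] by simp
    then show False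
      using 1 assms(1-4) by (auto dest: dvd_imp_le)
  next
    case 2
    then have "m dvd x - y"
      using eq mod_eq_dvd_iff_nat[of y x m] by simp
    then show False
      using 2 assms(1-4) by (auto dest: dvd_imp_le)
  qed
qed

lemma inj_on_mod_window: "inj_on (\<lambda>v. v mod m) {a..<a + (m::nat)}"
  unfolding inj_on_def using mod_neq_in_window by fastforce

lemma sign_change_between:
  fixes f :: "nat \<Rightarrow> real"
  assumes "\<And>z. f z \<noteq> 0" "x \<le> y" "f x * f y < 0"
  obtains z where "x \<le> z" "z < y" "f z * f (Suc z) < 0"
proof -
  have "\<exists>z. x \<le> z \<and> z < y \<and> f z * f (Suc z) < 0"
    using assms(2,3)
  proof (induction y rule: dec_induct)
    case base
    then show ?case by (simp add: mult_less_0_iff)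
  next
    case (step y)
    show ?case
    proof (cases "f x * f y < 0")
      case True
      then show ?thesis using step.IH by (auto intro: less_SucI)
    next
      case False
      then have "f y * f (Suc y) < 0"
        using step.prems assms(1)[of x] assms(1)[of y] by (auto simp: mult_less_0_iff)
      then show ?thesis using step.hyps by auto
    qed
  qed
  then show thesis using that by blast
qed

lemma Suc_mod_eq_cases:
  fixes e m :: nat
  assumes "e < m"
  shows "Suc e mod m = (if Suc e = m then 0 else Suc e)"
  using assms by (simp add: mod_Suc)

lemma self_intersectionsD:
  assumes "(i, j) \<in> self_intersections m u"
  shows "i < m" "j < m" "i \<noteq> j" "Suc i mod m \<noteq> j" "Suc j mod m \<noteq> i"
    "pedge m u i \<inter> pedge m u j \<noteq> {}"
proof -
  have "i < j" "j < m" "j \<noteq> Suc i" "\<not> (i = 0 \<and> j = m - 1)" "pedge m u i \<inter> pedge m u j \<noteq> {}"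
    using assms unfolding self_intersections_def by auto
  moreover from this have "Suc i mod m = Suc i" "Suc j mod m = (if Suc j = m then 0 else Suc j)"
    using Suc_mod_eq_cases[of j m] by simp_all
  ultimately show "i < m" "j < m" "i \<noteq> j" "Suc i mod m \<noteq> j" "Suc j mod m \<noteq> i"
    "pedge m u i \<inter> pedge m u j \<noteq> {}"
    by auto
qed

lemma self_intersectionI:
  assumes "e < m" "f < m" "e \<noteq> f" "Suc e mod m \<noteq> f" "Suc f mod m \<noteq> e"
    "pedge m u e \<inter> pedge m u f \<noteq> {}"
  shows "(min e f, max e f) \<in> self_intersections m u"
proof -
  have ordered: "(i, j) \<in> self_intersections m u"
    if "i < j" "j < m" "Suc i mod m \<noteq> j" "Suc j mod m \<noteq> i" "pedge m u i \<inter> pedge m u j \<noteq> {}"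
    for i j
  proof -
    have "Suc i mod m = Suc i" "Suc j mod m = (if Suc j = m then 0 else Suc j)"
      using Suc_mod_eq_cases[of j m] that(1,2) by simp_all
    then show ?thesis
      using that unfolding self_intersections_def by auto
  qed
  consider "e < f" | "f < e"
    using assms(3) by linarith
  then show ?thesis
  proof cases
    case 1
    then show ?thesis using ordered[of e f] assms by simp
  next
    case 2
    then show ?thesis using ordered[of f e] assms by (simp add: Int_commute)
  qed
qed

locale symmetric_polygon =
  fixes n :: nat and u :: "nat \<Rightarrow> real^3"
  assumes three_le: "3 \<le> n"
    and symmetric: "\<forall>i < 2 * n. u ((i + n) mod (2 * n)) = - u i"
    and general: "\<forall>i < 2 * n. \<forall>j < 2 * n. \<forall>k < 2 * n.
                    i mod n \<noteq> j mod n \<and> j mod n \<noteq> k mod n \<and> i mod n \<noteq> k mod n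
                    \<longrightarrow> det3 (u i) (u j) (u k) \<noteq> 0"
begin

lemma vertex_antipodal: "u ((x + n) mod (2 * n)) = - u (x mod (2 * n))"
proof -
  have "x mod (2 * n) < 2 * n"
    using three_le by simp
  then have "u ((x mod (2 * n) + n) mod (2 * n)) = - u (x mod (2 * n))"
    using symmetric by blast
  then show ?thesis
    by (simp add: mod_add_left_eq)
qed

lemma shift_mod_cancel: "(x + n) mod (2 * n) = (y + n) mod (2 * n) \<Longrightarrow> x mod (2 * n) = y mod (2 * n)"
  by (metis mod_add_left_eq add.assoc mult_2 mod_add_self2)

lemma det_nonzero:
  assumes "a mod n \<noteq> b mod n" "b mod n \<noteq> c mod n" "a mod n \<noteq> c mod n"
  shows "det3 (u (a mod (2 * n))) (u (b mod (2 * n))) (u (c mod (2 * n))) \<noteq> 0"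
proof -
  have "x mod (2 * n) mod n = x mod n" "x mod (2 * n) < 2 * n" for x
    using three_le by (simp_all add: mod_mod_cancel)
  then show ?thesis
    using general assms by metis
qed

definition turning :: "nat \<Rightarrow> real" where
  "turning x = det3 (u ((x + 2 * n - 1) mod (2 * n))) (u (x mod (2 * n))) (u (Suc x mod (2 * n)))"

lemma turning_mod: "turning (x mod (2 * n)) = turning x"
proof -
  have "(x mod (2 * n) + (2 * n - 1)) mod (2 * n) = (x + (2 * n - 1)) mod (2 * n)"
    by (simp add: mod_add_left_eq)
  moreover have "Suc (x mod (2 * n)) mod (2 * n) = Suc x mod (2 * n)"
    by (simp add: mod_Suc_eq)
  ultimately show ?thesis
    unfolding turning_def using three_le by (simp add: add.assoc)
qed

lemma turning_shift: "turning (x + n) = - turning x"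
proof -
  have "(x + n + 2 * n - 1) mod (2 * n) = ((x + 2 * n - 1) + n) mod (2 * n)"
    using three_le by (simp add: algebra_simps)
  then show ?thesis
    unfolding turning_def using vertex_antipodal[of "x + 2 * n - 1"] vertex_antipodal[of x]
      vertex_antipodal[of "Suc x"] by simp
qed

lemma turning_nonzero: "turning x \<noteq> 0"
proof -
  define c where "c = x + 2 * n - 1"
  have "c + 1 = x + 2 * n" "c + 2 = Suc x + 2 * n"
    using three_le unfolding c_def by simp_all
  then have "(c + 1) mod (2 * n) = x mod (2 * n)" "(c + 2) mod (2 * n) = Suc x mod (2 * n)"
    by (simp_all only: mod_add_self2)
  then have "turning x = det3 (u (c mod (2 * n))) (u ((c + 1) mod (2 * n))) (u ((c + 2) mod (2 * n)))"
    unfolding turning_def c_def[symmetric] by (simp only:)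
  moreover have "c mod n \<noteq> (c + 1) mod n" "(c + 1) mod n \<noteq> (c + 2) mod n" "c mod n \<noteq> (c + 2) mod n"
    using three_le by (simp_all add: mod_neq_in_window[of c])
  ultimately show ?thesis
    using det_nonzero by simp
qed

lemma sign_change_imp_inflection:
  assumes "turning c * turning (Suc c) < 0"
  shows "c mod (2 * n) \<in> inflections (2 * n) u"
proof -
  define i where "i = c mod (2 * n)"
  have "turning i = turning c" "turning (Suc i) = turning (Suc c)"
    unfolding i_def by (metis turning_mod, metis turning_mod mod_Suc_eq)
  moreover have "(Suc i + 2 * n - 1) mod (2 * n) = i mod (2 * n)"
    using three_le by simp
  then have "turning (Suc i) = det3 (u (i mod (2 * n))) (u (Suc i mod (2 * n))) (u ((i + 2) mod (2 * n)))"
    unfolding turning_def by simp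
  moreover have "i < 2 * n"
    unfolding i_def using three_le by simp
  ultimately show ?thesis
    using assms unfolding inflections_def i_def[symmetric] turning_def by simp
qed

lemma sign_change_shift:
  "turning c * turning (Suc c) < 0 \<Longrightarrow> turning (c + n) * turning (Suc (c + n)) < 0"
  using turning_shift[of c] turning_shift[of "Suc c"] by simp

lemma card_le_inflections:
  assumes "S \<subseteq> {a..<a + 2 * n}" "\<forall>c\<in>S. turning c * turning (Suc c) < 0"
  shows "card S \<le> card (inflections (2 * n) u)"
proof -
  have "card S = card ((\<lambda>c. c mod (2 * n)) ` S)"
    using inj_on_subset[OF inj_on_mod_window assms(1)] by (simp add: card_image)
  also have "\<dots> \<le> card (inflections (2 * n) u)"
  proof (rule card_mono)
    show "finite (inflections (2 * n) u)"
      by (rule finite_subset[of _ "{..<2 * n}"]) (auto simp: inflections_def)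
    show "(\<lambda>c. c mod (2 * n)) ` S \<subseteq> inflections (2 * n) u"
      using assms(2) sign_change_imp_inflection by blast
  qed
  finally show ?thesis .
qed

lemma rising_sign_change: "\<exists>a. turning a < 0 \<and> 0 < turning (Suc a)"
proof -
  have "0 < (turning 0)\<^sup>2"
    using turning_nonzero[of 0] by simp
  then have opposite: "turning 0 * turning n < 0"
    using turning_shift[of 0] by (simp add: power2_eq_square)
  obtain z where "0 \<le> z" "z < n" and z: "turning z * turning (Suc z) < 0"
    by (rule sign_change_between[OF turning_nonzero _ opposite]) simp
  show ?thesis
  proof (cases "turning z < 0")
    case True
    then show ?thesis
      using z by (auto simp: mult_less_0_iff)
  next
    case False
    then have "turning (z + n) < 0" "0 < turning (Suc (z + n))"
      using z turning_shift[of z] turning_shift[of "Suc z"] by (auto simp: mult_less_0_iff)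
    then show ?thesis by blast
  qed
qed

lemma two_le_card_inflections: "2 \<le> card (inflections (2 * n) u)"
proof -
  obtain a where "turning a < 0" "0 < turning (Suc a)"
    using rising_sign_change by blast
  then have a: "turning a * turning (Suc a) < 0"
    by (simp add: mult_neg_pos)
  have "card {a, a + n} \<le> card (inflections (2 * n) u)"
    by (rule card_le_inflections[of _ a]) (use a sign_change_shift[OF a] three_le in auto)
  then show ?thesis
    using three_le by simp
qed


lemma edge_antipodal: "pedge (2 * n) u ((x + n) mod (2 * n)) = uminus ` pedge (2 * n) u x"
proof -
  have "Suc ((x + n) mod (2 * n)) mod (2 * n) = (Suc x + n) mod (2 * n)"
    by (simp add: mod_Suc_eq)
  then show ?thesis
    unfolding pedge_def using vertex_antipodal[of x] vertex_antipodal[of "Suc x"]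
    by (simp add: sph_arc_uminus[symmetric])
qed

lemma edge_antipodal_disjoint: "pedge (2 * n) u x \<inter> uminus ` pedge (2 * n) u x = {}"
proof -
  have "x mod n \<noteq> Suc x mod n" "Suc x mod n \<noteq> (x + 2) mod n" "x mod n \<noteq> (x + 2) mod n"
    using three_le by (simp_all add: mod_neq_in_window[of x])
  then have "det3 (u (x mod (2 * n))) (u (Suc x mod (2 * n))) (u ((x + 2) mod (2 * n))) \<noteq> 0"
    by (rule det_nonzero)
  then show ?thesis
    unfolding pedge_def by (rule sph_arc_antipodal_disjoint)
qed

lemma two_le_card_self_intersections:
  assumes "self_intersections (2 * n) u \<noteq> {}"
  shows "2 \<le> card (self_intersections (2 * n) u)"
proof -
  obtain i j where ij: "(i, j) \<in> self_intersections (2 * n) u"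
    using assms by auto
  note facts = self_intersectionsD[OF ij]
  define e where "e = (i + n) mod (2 * n)"
  define f where "f = (j + n) mod (2 * n)"
  have Suc_shift: "Suc ((x + n) mod (2 * n)) mod (2 * n) = (Suc x + n) mod (2 * n)" for x
    by (simp add: mod_Suc_eq)
  have "e < 2 * n" "f < 2 * n"
    unfolding e_def f_def using three_le by simp_all
  moreover have "i mod (2 * n) = i" "j mod (2 * n) = j"
    using facts(1,2) by simp_all
  then have "e \<noteq> f" "Suc e mod (2 * n) \<noteq> f" "Suc f mod (2 * n) \<noteq> e"
    using shift_mod_cancel[of i j] shift_mod_cancel[of "Suc i" j] shift_mod_cancel[of "Suc j" i]
      facts(3-5) unfolding e_def f_def Suc_shift by auto
  moreover have "pedge (2 * n) u e \<inter> pedge (2 * n) u f \<noteq> {}"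
    unfolding e_def f_def edge_antipodal using facts(6) by blast
  ultimately have mirror: "(min e f, max e f) \<in> self_intersections (2 * n) u"
    by (rule self_intersectionI)
  have "e \<noteq> i"
    using mod_neq_in_window[of i i "2 * n" "i + n"] facts(1) three_le unfolding e_def by simp
  moreover have "e \<noteq> j"
  proof
    assume "e = j"
    then have "pedge (2 * n) u j = uminus ` pedge (2 * n) u i"
      unfolding e_def edge_antipodal[symmetric] by simp
    then show False
      using facts(6) edge_antipodal_disjoint[of i] by simp
  qed
  ultimately have "(min e f, max e f) \<noteq> (i, j)"
    by (auto simp: min_def max_def split: if_splits)
  then have "card {(i, j), (min e f, max e f)} = 2"
    by (simp only: card_2_iff) blast
  moreover have "finite (self_intersections (2 * n) u)"
    by (rule finite_subset[of _ "{..<2 * n} \<times> {..<2 * n}"]) (auto simp: self_intersections_def)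
  moreover have "{(i, j), (min e f, max e f)} \<subseteq> self_intersections (2 * n) u"
    using ij mirror by simp
  ultimately show ?thesis
    using card_mono[of "self_intersections (2 * n) u" "{(i, j), (min e f, max e f)}"] by linarith
qed

lemma positive_turning_block_crosses:
  assumes "\<And>i. 0 < i \<Longrightarrow> i < n \<Longrightarrow> 0 < turning (a + i)"
  shows "self_intersections (2 * n) u \<noteq> {}"
proof -
  define p where "p i = u ((a + i) mod (2 * n))" for i
  have "has_crossing p n"
  proof (rule left_turning_chain_to_antipode_crosses)
    show "2 \<le> n"
      using three_le by simp
    show "p n = - p 0"
      unfolding p_def using vertex_antipodal[of a] by simp
    show "general_position p n"
      unfolding general_position_def p_def
    proof (intro allI impI)
      fix x y z
      assume "x < n" "y < n" "z < n" "x \<noteq> y \<and> y \<noteq> z \<and> x \<noteq> z"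
      then have "(a + x) mod n \<noteq> (a + y) mod n" "(a + y) mod n \<noteq> (a + z) mod n"
        "(a + x) mod n \<noteq> (a + z) mod n"
        using mod_neq_in_window[of a] by simp_all
      then show "det3 (u ((a + x) mod (2 * n))) (u ((a + y) mod (2 * n))) (u ((a + z) mod (2 * n))) \<noteq> 0"
        by (rule det_nonzero)
    qed
    show "left_turning p n"
      unfolding left_turning_def
    proof (intro allI impI)
      fix i
      assume i: "0 < i \<and> i < n"
      then have "a + i + 2 * n - 1 = a + (i - 1) + 2 * n"
        by simp
      then have "turning (a + i) = det3 (p (i - 1)) (p i) (p (Suc i))"
        unfolding turning_def p_def by simp
      then show "0 < det3 (p (i - 1)) (p i) (p (Suc i))"
        using assms[of i] i by simp
    qed
  qed
  then obtain i j where ij: "i + 2 \<le> j" "j < n" "cones_meet (p i) (p (Suc i)) (p j) (p (Suc j))"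
    unfolding has_crossing_def by blast
  define e where "e = (a + i) mod (2 * n)"
  define f where "f = (a + j) mod (2 * n)"
  have edge: "pedge (2 * n) u ((a + x) mod (2 * n)) = sph_arc (p x) (p (Suc x))" for x
    unfolding pedge_def p_def by (simp add: mod_Suc_eq)
  have "e < 2 * n" "f < 2 * n"
    unfolding e_def f_def using three_le by simp_all
  moreover have "e \<noteq> f" "Suc e mod (2 * n) \<noteq> f" "Suc f mod (2 * n) \<noteq> e"
    unfolding e_def f_def mod_Suc_eq using ij(1,2) mod_neq_in_window[of "a + i" _ "2 * n"]
    by simp_all
  moreover have "pedge (2 * n) u e \<inter> pedge (2 * n) u f \<noteq> {}"
    unfolding e_def f_def edge by (rule sph_arcs_meet_if_cones_meet[OF ij(3)])
  ultimately show ?thesis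
    using self_intersectionI by blast
qed

lemma six_le_card_inflections:
  assumes "self_intersections (2 * n) u = {}"
  shows "6 \<le> card (inflections (2 * n) u)"
proof -
  obtain a where a: "turning a < 0" "0 < turning (Suc a)"
    using rising_sign_change by blast
  obtain i where i: "0 < i" "i < n" "turning (a + i) < 0"
    using positive_turning_block_crosses[of a] assms turning_nonzero by (meson linorder_neqE_linordered_idom)
  have "i \<noteq> 1"
    using a(2) i(3) by auto
  obtain z1 where z1: "a + 1 \<le> z1" "z1 < a + i" "turning z1 * turning (Suc z1) < 0"
    by (rule sign_change_between[OF turning_nonzero, of "a + 1" "a + i"])
      (use mult_pos_neg[OF a(2) i(3)] i \<open>i \<noteq> 1\<close> in simp_all)
  have "0 < turning (a + n)"
    using turning_shift[of a] a(1) by simp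
  obtain z2 where z2: "a + i \<le> z2" "z2 < a + n" "turning z2 * turning (Suc z2) < 0"
    by (rule sign_change_between[OF turning_nonzero, of "a + i" "a + n"])
      (use mult_neg_pos[OF i(3) \<open>0 < turning (a + n)\<close>] i in simp_all)
  have "turning a * turning (Suc a) < 0"
    using a by (simp add: mult_neg_pos)
  then have "card {a, z1, z2, a + n, z1 + n, z2 + n} \<le> card (inflections (2 * n) u)"
    by (intro card_le_inflections[of _ a]) (use z1 z2 i sign_change_shift in auto)
  moreover have "card {a, z1, z2, a + n, z1 + n, z2 + n} = 6"
    using z1(1,2) z2(1,2) i(2) by simp
  ultimately show ?thesis
    by simp
qed

end

theorem theorem14:
  fixes n :: nat and u :: "nat \<Rightarrow> real^3"
  assumes n3: "2 * n \<ge> 6"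
    and sphere: "\<forall>i < 2 * n. norm (u i) = 1"
    and symmetric: "\<forall>i < 2 * n. u ((i + n) mod (2 * n)) = - u i"
    and general: "\<forall>i < 2 * n. \<forall>j < 2 * n. \<forall>k < 2 * n.
                    i mod n \<noteq> j mod n \<and> j mod n \<noteq> k mod n \<and> i mod n \<noteq> k mod n
                    \<longrightarrow> det3 (u i) (u j) (u k) \<noteq> 0"
  shows "2 * card (self_intersections (2 * n) u) + card (inflections (2 * n) u) \<ge> 6"
proof -
  interpret symmetric_polygon n u
    using n3 symmetric general by unfold_locales simp_all
  show ?thesis
  proof (cases "self_intersections (2 * n) u = {}")
    case True
    then show ?thesis
      using six_le_card_inflections by simp
  next
    case False
    then show ?thesis
      using two_le_card_self_intersections two_le_card_inflections by linarith
  qed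
qed

end
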